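(* For $s>0$, $$\int_0^1dz\,\ln(1-z^2)\ln\Big(1+\frac{s^2}{z^2}\Big)=\frac{\pi^2}{2}+4(1-\ln2)\,Q_0(s)-2\vartheta^2(s)+2s\,\vartheta(s)\ln\frac{1+s^2}{4}-2s\,\mathrm{Cl}_2[2\vartheta(s)].$$
   Context: $\vartheta(s)=\arctan(1/s)$; $Q_0(s)=-s\,\vartheta(s)-\tfrac12\ln(1+s^2)$; $\mathrm{Cl}_2(z)=\sum_{j\ge1}\sin(jz)/j^2$ is the Clausen function. *)

theory Defs
  imports "HOL-Analysis.Analysis"
begin

definition vartheta :: "real \<Rightarrow> real" where
  "vartheta s = arctan (1 / s)"

definition Q0 :: "real \<Rightarrow> real" where
  "Q0 s = - s * vartheta s - ln (1 + s^2) / 2"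

definition Cl2 :: "real \<Rightarrow> real" where
  "Cl2 z = (\<Sum>j. sin (real (Suc j) * z) / (real (Suc j))^2)"

end

theory Submission
  imports Defs
begin

text \<open>
  Write I(s) for the integral of ln(1 - z^2) ln(1 + s^2/z^2) over 0 < z < 1 and R(s) for the
  claimed closed form (closed_form below).  The integrand is nonpositive, so everything is done
  with nonnegative (ennreal-valued) integrals and Tonelli's theorem.

  (1) Since ln(1 + s^2/z^2) is the integral of 2t/(z^2 + t^2) over [0, s], Tonelli gives
      -I(s) = integral over [0, s] of 2 M(t), where M(t) is the integral over [0, 1] of
      -ln(1 - z^2) t/(z^2 + t^2).
  (2) Writing -ln(1 - z^2) as an integral over u and using partial fractions in z, and then
      writing ln((1+u)/(1-u)) as an integral of 1/x, two more Tonelli steps give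
      M(t) = C(t) - vartheta(t) ln(1 + t^2), where C(t) is the integral over [0, 1] of the
      kernel arctan(2tx/D)/x with D = 1 + x + (1 - x) t^2.
  (3) The kernel is the power series sum_j sin((j+1) 2vartheta(t)) x^j/(j+1) (the imaginary part
      of -ln(1 - x e^{2 i vartheta(t)}) divided by x), so termwise integration gives
      C(t) = Cl2(2 vartheta(t)); differentiation under the integral sign gives
      C'(t) = ln(4/(1 + t^2))/(1 + t^2).
  (4) Hence R'(t) = -2 M(t) for t > 0, and R(t) tends to 0 as t tends to 0 from the right, so
      -R(s) is the integral of 2 M over [0, s], i.e. I(s) = R(s).
\<close>

lemma has_integral_real_antiderivative:
  fixes F f :: "real \<Rightarrow> real"
  assumes "a \<le> b" and "\<And>x. x \<in> {a..b} \<Longrightarrow> (F has_real_derivative f x) (at x)"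
  shows "(f has_integral (F b - F a)) {a..b}"
  using assms by (intro fundamental_theorem_of_calculus)
    (auto simp flip: has_real_derivative_iff_has_vector_derivative intro: has_field_derivative_at_within)

lemma nn_integral_real_antiderivative:
  fixes F f :: "real \<Rightarrow> real"
  assumes "a \<le> b" and "\<And>x. x \<in> {a..b} \<Longrightarrow> (F has_real_derivative f x) (at x)"
    and "\<And>x. x \<in> {a..b} \<Longrightarrow> 0 \<le> f x"
  shows "(\<integral>\<^sup>+x\<in>{a..b}. ennreal (f x) \<partial>lborel) = ennreal (F b - F a)"
  using assms by (intro nn_integral_has_integral_lebesgue' has_integral_real_antiderivative)

lemma nn_integral_const_factor:
  fixes f :: "real \<Rightarrow> real"
  assumes "0 \<le> c" and "f \<in> borel_measurable lborel" and "A \<in> sets lborel"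
  shows "(\<integral>\<^sup>+x\<in>A. ennreal (c * f x) \<partial>lborel) = ennreal c * (\<integral>\<^sup>+x\<in>A. ennreal (f x) \<partial>lborel)"
  using assms by (simp add: ennreal_mult' mult.assoc nn_integral_cmult)

lemma has_integral_right_limit_antiderivative:
  fixes F f :: "real \<Rightarrow> real"
  assumes "a < b" and deriv: "\<And>x. x \<in> {a<..b} \<Longrightarrow> (F has_real_derivative f x) (at x)"
    and lim: "(F \<longlongrightarrow> L) (at_right a)"
  shows "(f has_integral (F b - L)) {a..b}"
proof -
  define G where "G x = (if x = a then L else F x)" for x
  have G_deriv: "(G has_real_derivative f x) (at x)" if "x \<in> {a<..b}" for x
    by (rule has_field_derivative_transform_within_open[OF deriv[OF that], of "{a<..}"])
      (use that in \<open>auto simp: G_def\<close>)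
  have "continuous (at x within {a..b}) G" if x: "x \<in> {a..b}" for x
  proof (cases "x = a")
    case True
    have "eventually (\<lambda>x. F x = G x) (at_right a)"
      using eventually_at_right_less[of a] by eventually_elim (simp add: G_def)
    hence "(G \<longlongrightarrow> L) (at_right a)" using lim by (rule Lim_transform_eventually[rotated])
    moreover have "G a = L" by (simp add: G_def)
    ultimately have "(G \<longlongrightarrow> G a) (at a within {a..b})"
      by (simp only: at_within_Icc_at_right[OF assms(1)])
    thus ?thesis using True by (simp add: continuous_within)
  next
    case False
    with x have "x \<in> {a<..b}" by auto
    show ?thesis by (rule continuous_at_imp_continuous_within[OF DERIV_isCont[OF G_deriv]]) fact
  qed
  hence "continuous_on {a..b} G" by (simp add: continuous_on_eq_continuous_within)
  hence "(f has_integral (G b - G a)) {a..b}"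
    by (rule fundamental_theorem_of_calculus_interior[OF less_imp_le[OF assms(1)]])
      (use G_deriv in \<open>auto simp flip: has_real_derivative_iff_has_vector_derivative\<close>)
  thus ?thesis using assms(1) by (simp add: G_def)
qed

lemma nn_integral_swap_by_slices:
  fixes H :: "real \<Rightarrow> real \<Rightarrow> ennreal"
  assumes H: "case_prod H \<in> borel_measurable (lborel \<Otimes>\<^sub>M lborel)"
    and slice_x: "AE x in lborel. (\<integral>\<^sup>+y. H x y \<partial>lborel) = f x"
    and slice_y: "AE y in lborel. (\<integral>\<^sup>+x. H x y \<partial>lborel) = g y"
  shows "(\<integral>\<^sup>+x. f x \<partial>lborel) = (\<integral>\<^sup>+y. g y \<partial>lborel)"
proof -
  have "(\<integral>\<^sup>+x. f x \<partial>lborel) = (\<integral>\<^sup>+x. (\<integral>\<^sup>+y. H x y \<partial>lborel) \<partial>lborel)"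
    using slice_x by (intro nn_integral_cong_AE) (auto elim: eventually_mono)
  also have "\<dots> = (\<integral>\<^sup>+y. (\<integral>\<^sup>+x. H x y \<partial>lborel) \<partial>lborel)"
    using lborel_pair.Fubini'[OF H] by simp
  also have "\<dots> = (\<integral>\<^sup>+y. g y \<partial>lborel)"
    using slice_y by (intro nn_integral_cong_AE) (auto elim: eventually_mono)
  finally show ?thesis .
qed

lemma set_integral_nonpos_from_nn_integral:
  fixes f :: "real \<Rightarrow> real"
  assumes f: "f \<in> borel_measurable lborel" and A: "A \<in> sets lborel"
    and nonpos: "\<And>x. x \<in> A \<Longrightarrow> f x \<le> 0"
    and nn: "(\<integral>\<^sup>+x\<in>A. ennreal (- f x) \<partial>lborel) = ennreal r" and r: "0 \<le> r"
  shows "set_integrable lborel A f \<and> (LINT x:A|lborel. f x) = - r"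
proof -
  have "(\<integral>\<^sup>+x. ennreal (indicator A x * - f x) \<partial>lborel) = ennreal r"
    unfolding nn[symmetric] by (intro nn_integral_cong) (simp add: indicator_def)
  hence "has_bochner_integral lborel (\<lambda>x. indicator A x * - f x) r"
    using f A nonpos r by (intro has_bochner_integral_nn_integral) (auto simp: indicator_def)
  from has_bochner_integral_minus[OF this]
  have "has_bochner_integral lborel (\<lambda>x. indicator A x *\<^sub>R f x) (- r)" by simp
  thus ?thesis
    unfolding set_integrable_def set_lebesgue_integral_def by (simp add: has_bochner_integral_iff)
qed

lemma vartheta_pos: "t > 0 \<Longrightarrow> vartheta t > 0"
  unfolding vartheta_def by (simp add: zero_less_arctan_iff)

text \<open>For t \<noteq> 0, vartheta(t) differs from pi/2 - arctan t by a locally constant function.\<close>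
lemma vartheta_has_derivative:
  assumes "t \<noteq> 0"
  shows "(vartheta has_real_derivative - 1 / (1 + t^2)) (at t)"
  unfolding vartheta_def[abs_def] using assms
  by (auto intro!: derivative_eq_intros simp: field_simps power2_eq_square)

lemma vartheta_at_right_0: "(vartheta \<longlongrightarrow> pi / 2) (at_right 0)"
proof -
  have "filterlim (\<lambda>s::real. 1 / s) at_top (at_right 0)"
    using filterlim_inverse_at_top_right by (simp add: inverse_eq_divide)
  thus ?thesis
    unfolding vartheta_def[abs_def] by (rule filterlim_compose[OF tendsto_arctan_at_top])
qed

lemma Q0_has_derivative:
  assumes "t \<noteq> 0"
  shows "(Q0 has_real_derivative - vartheta t) (at t)"
proof -
  have "((\<lambda>s. ln (1 + s^2)) has_real_derivative 2 * t / (1 + t^2)) (at t)"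
    using add_pos_nonneg[OF zero_less_one zero_le_power2[of t]] by (auto intro!: derivative_eq_intros)
  from DERIV_diff[OF DERIV_minus[OF DERIV_mult[OF DERIV_ident vartheta_has_derivative[OF assms]]]
      DERIV_cdivide[OF this, of 2]]
  have "((\<lambda>s. - (s * vartheta s) - ln (1 + s^2) / 2) has_real_derivative
          - (1 * vartheta t + - 1 / (1 + t^2) * t) - 2 * t / (1 + t^2) / 2) (at t)" .
  moreover have "- (1 * vartheta t + - 1 / (1 + t^2) * t) - 2 * t / (1 + t^2) / 2 = - vartheta t"
  proof -
    have "2 * t / (1 + t^2) / 2 = t / (1 + t^2)"
      by (metis nonzero_mult_div_cancel_left times_divide_eq_right zero_neq_numeral)
    thus ?thesis by (simp add: algebra_simps)
  qed
  ultimately show ?thesis unfolding Q0_def[abs_def] by simp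
qed

text \<open>Since 2 vartheta(t) is the argument of (t + i)^2, its sine and cosine are rational in t.\<close>
lemma sin_cos_double_vartheta:
  assumes t: "t > 0"
  shows "sin (2 * vartheta t) = 2*t / (1 + t^2)" and "cos (2 * vartheta t) = (t^2 - 1) / (1 + t^2)"
proof -
  have p: "1 + (1/t)^2 > 0" by (simp add: add_pos_nonneg)
  have sq: "(sqrt (1 + (1/t)^2))^2 = 1 + (1/t)^2" using p by simp
  have s: "sin (vartheta t) = (1/t) / sqrt (1 + (1/t)^2)"
    and c: "cos (vartheta t) = 1 / sqrt (1 + (1/t)^2)"
    unfolding vartheta_def by (rule sin_arctan, rule cos_arctan)
  have "sin (2 * vartheta t) = 2 * (1/t) / (1 + (1/t)^2)"
    unfolding sin_double s c by (simp add: power2_eq_square[symmetric] sq)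
  thus "sin (2 * vartheta t) = 2*t / (1 + t^2)"
    using t by (simp add: field_simps power2_eq_square)
  have "cos (2 * vartheta t) = (1 - (1/t)^2) / (1 + (1/t)^2)"
    unfolding cos_double s c using p by (simp add: power_divide diff_divide_distrib power_mult_distrib)
  also have "\<dots> = (t^2 * (1 - (1/t)^2)) / (t^2 * (1 + (1/t)^2))"
    by (rule mult_divide_mult_cancel_left[symmetric]) (use t in simp)
  also have "\<dots> = (t^2 - 1) / (1 + t^2)"
    using t by (simp add: right_diff_distrib distrib_left power_divide)
  finally show "cos (2 * vartheta t) = (t^2 - 1) / (1 + t^2)" .
qed

lemma arctan_diff:
  fixes a b :: real
  assumes "a \<ge> 0" "b \<ge> 0"
  shows "arctan a - arctan b = arctan ((a - b) / (1 + a * b))"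
proof -
  have bounds: "- (pi/2) < arctan a - arctan b" "arctan a - arctan b < pi/2"
    using assms arctan_ubound[of a] arctan_ubound[of b] zero_le_arctan_iff[of a] zero_le_arctan_iff[of b]
    by linarith+
  have "tan (arctan a - arctan b) = (a - b) / (1 + a * b)"
    using tan_diff[of "arctan a" "arctan b"] cos_gt_zero_pi[OF bounds] by (simp add: tan_arctan)
  thus ?thesis using arctan_tan[OF bounds] by metis
qed

lemma neg_ln_one_minus_sq_nonneg:
  fixes z :: real
  assumes "0 \<le> z" "z < 1"
  shows "- ln (1 - z^2) \<ge> 0"
proof -
  have "z^2 < 1" using assms by (simp add: power_less_one_iff abs_less_iff)
  thus ?thesis using assms by (simp add: ln_le_zero_iff)
qed

definition arctan_div :: "real \<Rightarrow> real" where
  "arctan_div y = (if y = 0 then 1 else arctan y / y)"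

lemma isCont_arctan_div: "isCont arctan_div y"
proof (cases "y = 0")
  case True
  have "((\<lambda>y. (arctan y - arctan 0) / (y - 0)) \<longlongrightarrow> inverse (1 + 0\<^sup>2)) (at (0::real))"
    using DERIV_arctan[of 0] unfolding has_field_derivative_iff by simp
  hence "((\<lambda>y. arctan y / y) \<longlongrightarrow> 1) (at (0::real))" by simp
  hence "(arctan_div \<longlongrightarrow> 1) (at 0)"
    by (rule Lim_transform_eventually) (auto simp: arctan_div_def eventually_at intro!: exI[of _ 1])
  thus ?thesis using True by (simp add: isCont_def arctan_div_def)
next
  case False
  have "isCont (\<lambda>y. arctan y / y) y" using False by (intro continuous_intros) auto
  moreover have "eventually (\<lambda>x. arctan x / x = arctan_div x) (nhds y)"
    using eventually_nhds_in_open[of "-{0}" y] False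
    by (auto elim!: eventually_mono simp: arctan_div_def)
  ultimately show ?thesis using isCont_cong[where f="\<lambda>x. arctan x / x" and x=y and g=arctan_div] by simp
qed

lemma arctan_div_nonneg: "arctan_div y \<ge> 0"
  unfolding arctan_div_def
  by (cases "y > 0") (auto simp: divide_nonpos_neg arctan_less_zero_iff zero_le_arctan_iff)

text \<open>The kernel of C(t) is arctan(2tx/D)/x with D = kernel_den t x; written with arctan_div it
  is continuous also at x = 0.  clausen_kernel_dt is its derivative in t.\<close>
definition kernel_den :: "real \<Rightarrow> real \<Rightarrow> real" where
  "kernel_den t x = (1 + x) + (1 - x) * t^2"

definition clausen_kernel :: "real \<Rightarrow> real \<Rightarrow> real" where
  "clausen_kernel t x = arctan_div (2*t*x / kernel_den t x) * (2*t / kernel_den t x)"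

definition clausen_kernel_dt :: "real \<Rightarrow> real \<Rightarrow> real" where
  "clausen_kernel_dt t x = 2 * ((1 + x) - (1 - x) * t^2) / ((kernel_den t x)^2 + 4*t^2*x^2)"

definition clausen_integral :: "real \<Rightarrow> real" where
  "clausen_integral t = integral {0..1} (clausen_kernel t)"

lemma kernel_den_pos: "x \<in> {0..1} \<Longrightarrow> kernel_den t x > 0"
  unfolding kernel_den_def by (auto intro!: add_pos_nonneg)

lemma clausen_kernel_eq:
  "x \<in> {0..1} \<Longrightarrow> x \<noteq> 0 \<Longrightarrow> clausen_kernel t x = arctan (2*t*x / kernel_den t x) / x"
  using kernel_den_pos[of x t] unfolding clausen_kernel_def arctan_div_def by (auto simp: field_simps)

lemma clausen_kernel_nonneg: "t \<ge> 0 \<Longrightarrow> x \<in> {0..1} \<Longrightarrow> clausen_kernel t x \<ge> 0"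
  unfolding clausen_kernel_def using arctan_div_nonneg kernel_den_pos[of x t] by auto

text \<open>The kernel is a difference of arctangents; this is how it arises from Tonelli's theorem.\<close>
lemma clausen_kernel_arctan_diff:
  assumes t: "t \<ge> 0" and x: "0 < x" "x \<le> 1"
  shows "clausen_kernel t x = (arctan t - arctan (t * (1 - x) / (1 + x))) / x"
proof -
  have "(t - t*(1-x)/(1+x)) / (1 + t * (t*(1-x)/(1+x))) = 2*t*x / kernel_den t x"
  proof -
    have "t - t*(1-x)/(1+x) = 2*t*x / (1+x)" using x by (simp add: field_simps)
    moreover have "1 + t * (t*(1-x)/(1+x)) = kernel_den t x / (1+x)"
      using x by (simp add: field_simps kernel_den_def power2_eq_square)
    ultimately show ?thesis using x kernel_den_pos[of x t] by simp
  qed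
  moreover have "arctan t - arctan (t*(1-x)/(1+x))
      = arctan ((t - t*(1-x)/(1+x)) / (1 + t * (t*(1-x)/(1+x))))"
    using t x by (intro arctan_diff) auto
  ultimately show ?thesis using clausen_kernel_eq[of x t] x by simp
qed

lemma continuous_on_clausen_kernel: "continuous_on {0..1} (clausen_kernel t)"
proof -
  have den: "kernel_den t x \<noteq> 0" if "x \<in> {0..1}" for x
    using kernel_den_pos[OF that, of t] by simp
  have "continuous_on {0..1} (\<lambda>x. 2*t*x / kernel_den t x)"
    using den unfolding kernel_den_def by (intro continuous_intros) auto
  hence "continuous_on {0..1} (\<lambda>x. arctan_div (2*t*x / kernel_den t x))"
    by (rule continuous_on_compose2[OF continuous_at_imp_continuous_on[OF ballI[OF isCont_arctan_div]]])
      auto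
  moreover have "continuous_on {0..1} (\<lambda>x. 2*t / kernel_den t x)"
    using den unfolding kernel_den_def by (intro continuous_intros) auto
  ultimately show ?thesis unfolding clausen_kernel_def by (rule continuous_on_mult)
qed

lemma arctan_chain_factor:
  fixes a b D :: real
  assumes "D \<noteq> 0"
  shows "inverse (1 + (a / D)^2) * (b / D^2) = b / (D^2 + a^2)"
proof -
  have "1 + (a / D)^2 = (D^2 + a^2) / D^2" using assms by (simp add: field_simps power_divide)
  thus ?thesis using assms by simp
qed

lemma clausen_kernel_has_derivative:
  assumes x: "x \<in> {0..1}"
  shows "((\<lambda>t. clausen_kernel t x) has_real_derivative clausen_kernel_dt t x) (at t)"
proof (cases "x = 0")
  case True
  have "1 + t^2 \<noteq> 0" by (metis power_one sum_power2_eq_zero_iff zero_neq_one)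
  hence "((\<lambda>t. 2*t / (1 + t^2)) has_real_derivative clausen_kernel_dt t x) (at t)"
    unfolding True clausen_kernel_dt_def kernel_den_def
    by (auto intro!: derivative_eq_intros simp: field_simps power2_eq_square)
  thus ?thesis by (simp add: True clausen_kernel_def arctan_div_def kernel_den_def)
next
  case False
  define D where "D t = kernel_den t x" for t
  have D: "D t \<noteq> 0" unfolding D_def using kernel_den_pos[OF x, of t] by simp
  have "((\<lambda>t. 2*t*x / D t) has_real_derivative 2*x*((1+x) - (1-x)*t^2) / (D t)^2) (at t)"
    using D unfolding D_def kernel_den_def
    by (auto intro!: derivative_eq_intros simp: power2_eq_square algebra_simps)
  from DERIV_cdivide[OF DERIV_chain2[OF DERIV_arctan this], of x]
  have "((\<lambda>t. arctan (2*t*x / D t) / x) has_real_derivative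
         inverse (1 + (2*t*x / D t)^2) * (2*x*((1+x) - (1-x)*t^2) / (D t)^2) / x) (at t)" .
  also have "inverse (1 + (2*t*x / D t)^2) * (2*x*((1+x) - (1-x)*t^2) / (D t)^2) / x
             = 2*x*((1+x) - (1-x)*t^2) / ((D t)^2 + (2*t*x)^2) / x"
    by (simp only: arctan_chain_factor[OF D])
  also have "\<dots> = clausen_kernel_dt t x"
    using False unfolding clausen_kernel_dt_def D_def by (simp add: power_mult_distrib)
  finally show ?thesis using clausen_kernel_eq[OF x False] by (simp add: D_def)
qed

lemma continuous_on_clausen_kernel_dt:
  "continuous_on (UNIV \<times> {0..1}) (\<lambda>(t, x). clausen_kernel_dt t x)"
  unfolding clausen_kernel_dt_def case_prod_unfold
proof (intro continuous_intros ballI)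
  fix p :: "real \<times> real" assume "p \<in> UNIV \<times> {0..1}"
  hence "kernel_den (fst p) (snd p) > 0" by (intro kernel_den_pos) auto
  thus "(kernel_den (fst p) (snd p))^2 + 4 * (fst p)^2 * (snd p)^2 \<noteq> 0"
    by (metis add_pos_nonneg less_irrefl mult_nonneg_nonneg zero_le_power2 zero_less_power
        zero_le_numeral)
qed (simp_all add: kernel_den_def case_prod_unfold continuous_intros)

text \<open>The t-derivative integrates in x to an elementary function (a logarithmic derivative in x).\<close>
lemma integral_clausen_kernel_dt:
  "integral {0..1} (clausen_kernel_dt t) = ln (4 / (1 + t^2)) / (1 + t^2)"
proof -
  define G where "G x = ln ((kernel_den t x)^2 + 4*t^2*x^2) / (1 + t^2)" for x
  have p: "1 + t^2 > 0" by (simp add: add_pos_nonneg)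
  have "(G has_real_derivative clausen_kernel_dt t x) (at x)" if x: "x \<in> {0..1}" for x
  proof -
    have Q: "(kernel_den t x)^2 + 4*t^2*x^2 > 0"
      using kernel_den_pos[OF x, of t] by (simp add: add_pos_nonneg)
    have "((\<lambda>x. (kernel_den t x)^2 + 4*t^2*x^2) has_real_derivative
            2 * kernel_den t x * (1 - t^2) + 8*t^2*x) (at x)"
      unfolding kernel_den_def
      by (auto intro!: derivative_eq_intros simp: algebra_simps power2_eq_square)
    from DERIV_cdivide[OF DERIV_chain2[OF DERIV_ln_divide[OF Q] this], of "1 + t^2"]
    have "(G has_real_derivative 1 / ((kernel_den t x)^2 + 4*t^2*x^2)
             * (2 * kernel_den t x * (1 - t^2) + 8*t^2*x) / (1 + t^2)) (at x)"
      unfolding G_def .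
    moreover have "2 * kernel_den t x * (1 - t^2) + 8*t^2*x = (1 + t^2) * (2*((1 + x) - (1 - x)*t^2))"
      unfolding kernel_den_def by (simp add: algebra_simps power2_eq_square)
    ultimately show ?thesis using p unfolding clausen_kernel_dt_def by simp
  qed
  hence "(clausen_kernel_dt t has_integral (G 1 - G 0)) {0..1}"
    by (intro has_integral_real_antiderivative) auto
  moreover have "G 1 - G 0 = ln (4 / (1 + t^2)) / (1 + t^2)"
  proof -
    have "G 1 - G 0 = (ln (4 * (1 + t^2)) - ln ((1 + t^2)^2)) / (1 + t^2)"
      unfolding G_def kernel_den_def by (simp add: algebra_simps diff_divide_distrib)
    also have "ln (4 * (1 + t^2)) - ln ((1 + t^2)^2) = ln (4 / (1 + t^2))"
      using p ln_mult[of 4 "1 + t^2"] by (simp add: ln_div ln_realpow)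
    finally show ?thesis .
  qed
  ultimately show ?thesis by (simp add: integral_unique)
qed

lemma clausen_integral_has_derivative:
  "(clausen_integral has_real_derivative ln (4 / (1 + t^2)) / (1 + t^2)) (at t)"
proof -
  have "(clausen_integral has_real_derivative integral (cbox 0 1) (clausen_kernel_dt t)) (at t within UNIV)"
    unfolding clausen_integral_def[abs_def] cbox_interval[symmetric]
    using clausen_kernel_has_derivative continuous_on_clausen_kernel_dt continuous_on_clausen_kernel
    by (intro leibniz_rule_field_derivative)
      (auto intro: integrable_continuous_interval simp: cbox_interval)
  thus ?thesis by (simp add: integral_clausen_kernel_dt)
qed

text \<open>Imaginary part of the logarithmic series for -ln(1 - x e^{i phi}).\<close>
lemma sums_sin_power_arctan:
  fixes x phi :: real
  assumes x: "0 \<le> x" "x < 1"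
  shows "(\<lambda>n. x^n * sin (real n * phi) / real n) sums arctan (x * sin phi / (1 - x * cos phi))"
proof -
  define w where "w = complex_of_real x * cis phi"
  have "cmod (-w) < 1" using x unfolding w_def by (simp add: norm_mult)
  from sums_Im[OF Ln_series'[OF this]]
  have "(\<lambda>n. Im (- (w^n) / of_nat n)) sums Im (ln (1 - w))" by simp
  moreover have "(\<lambda>n. Im (- (w^n) / of_nat n)) = (\<lambda>n. - (x^n * sin (real n * phi) / real n))"
    unfolding w_def by (auto simp: power_mult_distrib Complex.DeMoivre)
  moreover have "Im (ln (1 - w)) = - arctan (x * sin phi / (1 - x * cos phi))"
  proof -
    have "x * cos phi \<le> x * 1" using x by (intro mult_left_mono) auto
    hence re: "Re (1 - w) > 0" using x unfolding w_def by simp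
    hence "1 - w \<noteq> 0" by auto
    hence "Im (ln (1 - w)) = arctan (Im (1 - w) / Re (1 - w))" using re by (simp add: Im_Ln_eq)
    thus ?thesis unfolding w_def by (simp add: arctan_minus[symmetric])
  qed
  ultimately have "(\<lambda>n. - (x^n * sin (real n * phi) / real n))
                     sums (- arctan (x * sin phi / (1 - x * cos phi)))"
    by metis
  thus ?thesis using sums_minus by fastforce
qed

lemma summable_inverse_Suc_squared: "summable (\<lambda>j::nat. 1 / (real (Suc j))^2)"
proof -
  have "summable (\<lambda>n::nat. inverse (real n ^ 2))" by (rule inverse_power_summable) simp
  hence "summable (\<lambda>n::nat. inverse (real (Suc n) ^ 2))" by (subst summable_Suc_iff)
  thus ?thesis by (simp add: inverse_eq_divide)
qed

text \<open>Termwise Lebesgue integration over [0, 1] of a power series with bounded coefficients a_j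
  and summable a_j/(j+1): the monomials are dominated by a geometric series off x = 1.\<close>
lemma lebesgue_integral_power_series_unit_interval:
  fixes a :: "nat \<Rightarrow> real"
  assumes bounded: "\<And>j. \<bar>a j\<bar> \<le> B"
    and summable: "summable (\<lambda>j. \<bar>a j\<bar> / real (Suc j))"
  shows "integrable lborel (\<lambda>x. \<Sum>j. x^j * indicator {0..1} x * a j)"
    and "(\<integral>x. (\<Sum>j. x^j * indicator {0..1} x * a j) \<partial>lborel) = (\<Sum>j. a j / real (Suc j))"
proof -
  define g where "g j x = x^j * indicator {0..1} x * a j" for j x
  have int_power: "integrable lborel (\<lambda>x::real. x^j * indicator {0..1} x)" for j
    using borel_integrable_atLeastAtMost'[of 0 1 "\<lambda>x. x^j"]
    by (simp add: set_integrable_def mult.commute continuous_intros)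
  have int_g: "integrable lborel (g j)" for j
    unfolding g_def using int_power by (rule integrable_mult_left)
  have "(\<integral>x. norm (g j x) \<partial>lborel) = \<bar>a j\<bar> / real (Suc j)" for j
  proof -
    have "(\<lambda>x. norm (g j x)) = (\<lambda>x. x^j * indicator {0..1} x * \<bar>a j\<bar>)"
      by (auto simp: g_def abs_mult indicator_def)
    thus ?thesis using integral_power[of 0 1 j] by simp
  qed
  hence sum_norms: "summable (\<lambda>j. \<integral>x. norm (g j x) \<partial>lborel)" using summable by simp
  have AE_summable: "AE x in lborel. summable (\<lambda>j. norm (g j x))"
    using AE_lborel_singleton[of 1]
  proof eventually_elim
    case (elim x)
    show ?case
    proof (cases "x \<in> {0..1}")
      case True
      with elim have x: "0 \<le> x" "x < 1" by auto
      have "norm (norm (g j x)) = \<bar>a j\<bar> * x^j" for j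
        using True x by (simp add: g_def abs_mult)
      hence "norm (norm (g j x)) \<le> B * x^j" for j
        using x bounded[of j] by (simp add: mult_right_mono)
      thus ?thesis
        by (intro summable_comparison_test[OF _ summable_mult[OF summable_geometric]]) (use x in auto)
    qed (simp add: g_def)
  qed
  show "integrable lborel (\<lambda>x. \<Sum>j. x^j * indicator {0..1} x * a j)"
    using integrable_suminf[OF int_g AE_summable sum_norms] unfolding g_def .
  have "integral\<^sup>L lborel (g j) = a j / real (Suc j)" for j
    unfolding g_def using integral_power[of 0 1 j] by simp
  thus "(\<integral>x. (\<Sum>j. x^j * indicator {0..1} x * a j) \<partial>lborel) = (\<Sum>j. a j / real (Suc j))"
    using integral_suminf[OF int_g AE_summable sum_norms] unfolding g_def by simp
qed

lemma has_integral_power_series_unit_interval: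
  fixes a :: "nat \<Rightarrow> real" and f :: "real \<Rightarrow> real"
  assumes bounded: "\<And>j. \<bar>a j\<bar> \<le> B"
    and summable: "summable (\<lambda>j. \<bar>a j\<bar> / real (Suc j))"
    and sums: "\<And>x. 0 < x \<Longrightarrow> x < 1 \<Longrightarrow> (\<lambda>j. a j * x^j) sums f x"
    and cont: "continuous_on {0..1} f"
  shows "(f has_integral (\<Sum>j. a j / real (Suc j))) {0..1}"
proof -
  note series = lebesgue_integral_power_series_unit_interval[OF bounded summable]
  have "(\<integral>x. indicator {0..1} x * f x \<partial>lborel) = (\<integral>x. (\<Sum>j. x^j * indicator {0..1} x * a j) \<partial>lborel)"
  proof (rule integral_cong_AE)
    show "AE x in lborel. indicator {0..1} x * f x = (\<Sum>j. x^j * indicator {0..1} x * a j)"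
      using AE_lborel_singleton[of 0] AE_lborel_singleton[of 1]
    proof eventually_elim
      case (elim x)
      show ?case
      proof (cases "x \<in> {0..1}")
        case True
        with elim have "0 < x" "x < 1" by auto
        from sums[OF this] show ?thesis using True by (simp add: sums_iff mult.commute)
      qed simp
    qed
  qed (use borel_measurable_continuous_on_indicator[OF _ cont] borel_measurable_integrable[OF series(1)]
       in \<open>auto simp: mult.commute\<close>)
  hence "(LINT x:{0..1}|lborel. f x) = (\<Sum>j. a j / real (Suc j))"
    by (simp add: set_lebesgue_integral_def series(2))
  moreover have "set_integrable lborel {0..1} f"
    using cont by (rule borel_integrable_atLeastAtMost')
  ultimately show ?thesis
    using set_borel_integral_eq_integral by (metis has_integral_integral)
qed

text \<open>For t > 0 the kernel is the power series in x whose termwise integral is Cl2(2 vartheta t):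
  with phi = 2 vartheta(t), the arctangent of the logarithmic series equals arctan(2tx/D).\<close>
lemma clausen_kernel_power_series:
  assumes t: "t > 0" and x: "0 < x" "x < 1"
  shows "(\<lambda>j. sin (real (Suc j) * (2 * vartheta t)) / real (Suc j) * x^j) sums clausen_kernel t x"
proof -
  define phi where "phi = 2 * vartheta t"
  define A where "A = arctan (x * sin phi / (1 - x * cos phi))"
  have "(\<lambda>n. x^n * sin (real n * phi) / real n) sums A"
    unfolding A_def using x by (intro sums_sin_power_arctan) auto
  hence "(\<lambda>n. x^(Suc n) * sin (real (Suc n) * phi) / real (Suc n)) sums A"
    by (subst sums_Suc_iff) simp
  from sums_divide[OF this, of x]
  have "(\<lambda>j. sin (real (Suc j) * phi) / real (Suc j) * x^j) sums (A / x)"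
    using x by (simp add: mult.commute)
  moreover have "A / x = clausen_kernel t x"
  proof -
    have p: "1 + t^2 > 0" by (simp add: add_pos_nonneg)
    have sc: "sin phi = 2*t / (1 + t^2)" "cos phi = (t^2 - 1) / (1 + t^2)"
      unfolding phi_def using sin_cos_double_vartheta[OF t] by auto
    have "1 - x * cos phi = kernel_den t x / (1 + t^2)"
      unfolding sc kernel_den_def using p by (simp add: field_simps)
    hence "x * sin phi / (1 - x * cos phi) = (x * (2*t) / (1 + t^2)) / (kernel_den t x / (1 + t^2))"
      unfolding sc by simp
    also have "\<dots> = 2*t*x / kernel_den t x"
      using p kernel_den_pos[of x t] x by (simp add: mult.commute)
    finally have "x * sin phi / (1 - x * cos phi) = 2*t*x / kernel_den t x" .
    thus ?thesis unfolding A_def using clausen_kernel_eq[of x t] x by simp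
  qed
  ultimately show ?thesis unfolding phi_def by simp
qed

lemma clausen_integral_eq_Cl2:
  assumes t: "t > 0"
  shows "clausen_integral t = Cl2 (2 * vartheta t)"
proof -
  define a where "a j = sin (real (Suc j) * (2 * vartheta t)) / real (Suc j)" for j
  have bounded: "\<bar>a j\<bar> \<le> 1" for j
    unfolding a_def by (simp add: abs_divide divide_le_eq_1 order_trans[OF abs_sin_le_one])
  have "\<bar>a j\<bar> / real (Suc j) \<le> 1 / (real (Suc j))^2" for j
    unfolding a_def by (simp add: abs_sin_le_one divide_right_mono power2_eq_square)
  hence summable: "summable (\<lambda>j. \<bar>a j\<bar> / real (Suc j))"
    by (intro summable_comparison_test[OF _ summable_inverse_Suc_squared]) auto
  have "(clausen_kernel t has_integral (\<Sum>j. a j / real (Suc j))) {0..1}"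
    using bounded summable clausen_kernel_power_series[OF t] continuous_on_clausen_kernel
    unfolding a_def by (rule has_integral_power_series_unit_interval)
  thus ?thesis
    unfolding clausen_integral_def Cl2_def a_def by (simp add: integral_unique power2_eq_square)
qed

definition closed_form :: "real \<Rightarrow> real" where
  "closed_form s = pi^2 / 2 + 4 * (1 - ln 2) * Q0 s - 2 * (vartheta s)^2
                   + 2 * s * vartheta s * ln ((1 + s^2) / 4)
                   - 2 * s * Cl2 (2 * vartheta s)"

lemma Cl2_double_vartheta_has_derivative:
  assumes t: "t > 0"
  shows "((\<lambda>s. Cl2 (2 * vartheta s)) has_real_derivative ln (4 / (1 + t^2)) / (1 + t^2)) (at t)"
  by (rule has_field_derivative_transform_within_open[OF clausen_integral_has_derivative, of "{0<..}"])
     (use t clausen_integral_eq_Cl2 in auto)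

text \<open>The algebra behind the derivative of the closed form, in the shape produced by the sum,
  product and chain rules, with p = 1 + t^2, c = ln 2 and L = ln p.\<close>
lemma closed_form_derivative_identity:
  fixes v C t p c L :: real
  assumes "(1 + t^2) / p = 1"
  shows "0 + 4 * (1 - c) * (- v) - 2 * (2 * v * (- 1 / p))
          + ((2 * 1 * v + - 1 / p * (2 * t)) * (L - 2 * c) + 2 * t / p * (2 * t * v))
          - (2 * 1 * C + (2 * c - L) / p * (2 * t)) = 2 * (v * L - C)"
proof -
  have "4 * v * ((1 + t^2) / p) = 4 * v" using assms by simp
  thus ?thesis by (simp add: algebra_simps add_divide_distrib diff_divide_distrib power2_eq_square)
qed

lemma closed_form_has_derivative:
  assumes t: "t > 0"
  shows "(closed_form has_real_derivative 2 * (vartheta t * ln (1 + t^2) - Cl2 (2 * vartheta t))) (at t)"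
proof -
  have p: "1 + t^2 > 0" by (simp add: add_pos_nonneg)
  have ln4: "ln 4 = 2 * ln (2::real)" using ln_realpow[of 2 2] by simp
  have dV: "(vartheta has_real_derivative - 1 / (1 + t^2)) (at t)"
    using t by (intro vartheta_has_derivative) auto
  have dV2: "((\<lambda>s. (vartheta s)^2) has_real_derivative 2 * vartheta t * (- 1 / (1 + t^2))) (at t)"
    using dV by (auto intro!: derivative_eq_intros)
  have dL: "((\<lambda>s. ln ((1 + s^2) / 4)) has_real_derivative 2 * t / (1 + t^2)) (at t)"
    using p by (auto intro!: derivative_eq_intros simp: field_simps)
  note dT = DERIV_mult[OF DERIV_mult[OF DERIV_cmult[OF DERIV_ident, of 2] dV] dL]
  note dC = DERIV_mult[OF DERIV_cmult[OF DERIV_ident, of 2] Cl2_double_vartheta_has_derivative[OF t]]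
  show ?thesis
    unfolding closed_form_def[abs_def]
  proof (rule DERIV_cong[OF DERIV_diff[OF DERIV_add[OF DERIV_diff[OF DERIV_add[OF DERIV_const
          DERIV_cmult[OF Q0_has_derivative]] DERIV_cmult[OF dV2]] dT] dC]])
    show "t \<noteq> 0" using t by simp
    show "0 + 4 * (1 - ln 2) * - vartheta t - 2 * (2 * vartheta t * (- 1 / (1 + t^2)))
        + ((2 * 1 * vartheta t + - 1 / (1 + t^2) * (2 * t)) * ln ((1 + t^2) / 4)
           + 2 * t / (1 + t^2) * (2 * t * vartheta t))
        - (2 * 1 * Cl2 (2 * vartheta t) + ln (4 / (1 + t^2)) / (1 + t^2) * (2 * t))
        = 2 * (vartheta t * ln (1 + t^2) - Cl2 (2 * vartheta t))"
      using closed_form_derivative_identity[where v = "vartheta t" and C = "Cl2 (2 * vartheta t)"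
        and t = t and p = "1 + t^2" and c = "ln 2" and L = "ln (1 + t^2)"] p
      by (simp add: ln_div ln4)
  qed
qed

lemma Cl2_bounded: "\<bar>Cl2 z\<bar> \<le> (\<Sum>j. 1 / (real (Suc j))^2)"
proof -
  have term_bound: "\<bar>sin (real (Suc j) * z) / (real (Suc j))^2\<bar> \<le> 1 / (real (Suc j))^2" for j
    by (simp add: abs_sin_le_one divide_right_mono)
  have summable: "summable (\<lambda>j. \<bar>sin (real (Suc j) * z) / (real (Suc j))^2\<bar>)"
    by (rule summable_comparison_test[OF _ summable_inverse_Suc_squared]) (use term_bound in auto)
  have "\<bar>Cl2 z\<bar> \<le> (\<Sum>j. \<bar>sin (real (Suc j) * z) / (real (Suc j))^2\<bar>)"
    unfolding Cl2_def by (rule summable_rabs[OF summable])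
  also have "\<dots> \<le> (\<Sum>j. 1 / (real (Suc j))^2)"
    by (rule suminf_le[OF term_bound summable summable_inverse_Suc_squared])
  finally show ?thesis .
qed

lemma closed_form_at_right_0: "(closed_form \<longlongrightarrow> 0) (at_right 0)"
proof -
  define B where "B = (\<Sum>j. 1 / (real (Suc j))^2)"
  have "((\<lambda>s. 2 * s * Cl2 (2 * vartheta s)) \<longlongrightarrow> 0) (at_right 0)"
  proof (rule Lim_null_comparison)
    show "\<forall>\<^sub>F s in at_right 0. norm (2 * s * Cl2 (2 * vartheta s)) \<le> 2 * \<bar>s\<bar> * B"
      using Cl2_bounded unfolding B_def
      by (intro always_eventually allI) (auto simp: abs_mult intro!: mult_left_mono)
    show "((\<lambda>s. 2 * \<bar>s\<bar> * B) \<longlongrightarrow> 0) (at_right 0)"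
      by (rule tendsto_eq_intros refl | simp)+
  qed
  moreover have "((\<lambda>s. pi^2 / 2 + 4 * (1 - ln 2) * Q0 s - 2 * (vartheta s)^2
                       + 2 * s * vartheta s * ln ((1 + s^2) / 4))
        \<longlongrightarrow> pi^2 / 2 + 4 * (1 - ln 2) * (- 0 * (pi/2) - ln (1 + 0^2) / 2) - 2 * (pi/2)^2
             + 2 * 0 * (pi/2) * ln ((1 + 0^2) / 4)) (at_right 0)"
    unfolding Q0_def by (intro tendsto_intros vartheta_at_right_0) auto
  ultimately have "(closed_form \<longlongrightarrow> (pi^2 / 2 + 4 * (1 - ln 2) * (- 0 * (pi/2) - ln (1 + 0^2) / 2)
             - 2 * (pi/2)^2 + 2 * 0 * (pi/2) * ln ((1 + 0^2) / 4)) - 0) (at_right 0)"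
    unfolding closed_form_def[abs_def] by (intro tendsto_diff)
  thus ?thesis by (simp add: power2_eq_square)
qed

lemma has_integral_closed_form:
  assumes s: "s > 0"
  shows "((\<lambda>t. 2 * (Cl2 (2 * vartheta t) - vartheta t * ln (1 + t^2))) has_integral - closed_form s) {0..s}"
proof -
  have "((\<lambda>t. - closed_form t) has_real_derivative 2 * (Cl2 (2 * vartheta t) - vartheta t * ln (1 + t^2)))
          (at t)" if "t \<in> {0<..s}" for t
    using DERIV_minus[OF closed_form_has_derivative[of t]] that by simp
  from has_integral_right_limit_antiderivative[OF s this tendsto_minus[OF closed_form_at_right_0]]
  show ?thesis by simp
qed

lemma nn_integral_inverse:
  assumes u: "0 < u" "u < 1"
  shows "(\<integral>\<^sup>+x\<in>{(1 - u) / (1 + u)..1}. ennreal (1 / x) \<partial>lborel) = ennreal (ln (1 + u) - ln (1 - u))"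
proof -
  have a: "0 < (1 - u) / (1 + u)" "(1 - u) / (1 + u) \<le> 1" using u by (auto simp: divide_le_eq)
  hence "(\<integral>\<^sup>+x\<in>{(1 - u) / (1 + u)..1}. ennreal (1 / x) \<partial>lborel) = ennreal (ln 1 - ln ((1 - u) / (1 + u)))"
    by (intro nn_integral_real_antiderivative) (auto intro!: derivative_eq_intros)
  thus ?thesis using u by (simp add: ln_div)
qed

lemma nn_integral_arctan_kernel:
  assumes t: "t \<ge> 0" and x: "0 < x" "x \<le> 1"
  shows "(\<integral>\<^sup>+u\<in>{(1 - x) / (1 + x)..1}. ennreal (t / (1 + t^2 * u^2)) \<partial>lborel)
       = ennreal (arctan t - arctan (t * (1 - x) / (1 + x)))"
proof -
  have "(1 - x) / (1 + x) \<le> 1" using x by (simp add: divide_le_eq)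
  moreover have "((\<lambda>u. arctan (t * u)) has_real_derivative t / (1 + t^2 * u^2)) (at u)" for u
    by (auto intro!: derivative_eq_intros simp: power_mult_distrib field_simps)
  moreover have "0 \<le> t / (1 + t^2 * u^2)" for u using t by (simp add: add_pos_nonneg)
  ultimately show ?thesis by (subst nn_integral_real_antiderivative) auto
qed

lemma rational_kernel_bounds:
  fixes u z :: real
  assumes u: "0 \<le> u" "u < 1" and z: "z \<in> {0..1}"
  shows "0 < 1 - u*z" "0 < 1 + u*z" "0 < 1 - u^2 * z^2"
proof -
  have "u*z \<le> u" using z u by (intro mult_left_le) auto
  moreover have "0 \<le> u*z" using z u by simp
  ultimately show "0 < 1 - u*z" "0 < 1 + u*z" using u by linarith+
  hence "0 < (1 - u*z) * (1 + u*z)" by simp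
  thus "0 < 1 - u^2 * z^2" by (simp add: algebra_simps power2_eq_square)
qed

lemma nn_integral_neg_ln_kernel:
  assumes z: "0 \<le> z" "z < 1"
  shows "(\<integral>\<^sup>+u\<in>{0..1}. ennreal (2 * z^2 * u / (1 - z^2 * u^2)) \<partial>lborel) = ennreal (- ln (1 - z^2))"
proof -
  have pos: "1 - z^2 * u^2 > 0" if "u \<in> {0..1}" for u
    using rational_kernel_bounds(3)[OF z that] .
  have "((\<lambda>u. - ln (1 - z^2 * u^2)) has_real_derivative 2 * z^2 * u / (1 - z^2 * u^2)) (at u)"
    if "u \<in> {0..1}" for u
    using pos[OF that] by (auto intro!: derivative_eq_intros simp: field_simps power2_eq_square)
  moreover have "0 \<le> 2 * z^2 * u / (1 - z^2 * u^2)" if "u \<in> {0..1}" for u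
    using pos[OF that] that by simp
  ultimately show ?thesis by (subst nn_integral_real_antiderivative) auto
qed

lemma nn_integral_log_kernel:
  assumes c: "0 \<le> c"
  shows "(\<integral>\<^sup>+u\<in>{0..1}. ennreal (2 * u * t^2 * c / (1 + t^2 * u^2)) \<partial>lborel) = ennreal (c * ln (1 + t^2))"
proof -
  have "((\<lambda>u. c * ln (1 + t^2 * u^2)) has_real_derivative 2 * u * t^2 * c / (1 + t^2 * u^2)) (at u)" for u
  proof -
    have "0 < 1 + t^2 * u^2" by (simp add: add_pos_nonneg)
    thus ?thesis by (auto intro!: derivative_eq_intros simp: field_simps)
  qed
  moreover have "0 \<le> 2 * u * t^2 * c / (1 + t^2 * u^2)" if "u \<in> {0..1}" for u
    using that c by (simp add: add_pos_nonneg)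
  ultimately show ?thesis by (subst nn_integral_real_antiderivative) auto
qed

lemma nn_integral_ln_one_plus_sq:
  assumes z: "z > 0" and s: "s \<ge> 0"
  shows "(\<integral>\<^sup>+t\<in>{0..s}. ennreal (2 * t / (z^2 + t^2)) \<partial>lborel) = ennreal (ln (1 + s^2 / z^2))"
proof -
  have "((\<lambda>t. ln (z^2 + t^2)) has_real_derivative 2 * t / (z^2 + t^2)) (at t)" for t
    using z by (auto intro!: derivative_eq_intros simp: add_pos_nonneg)
  moreover have "0 \<le> 2 * t / (z^2 + t^2)" if "t \<in> {0..s}" for t using that by simp
  moreover have "ln (z^2 + s^2) - ln (z^2 + 0^2) = ln (1 + s^2 / z^2)"
  proof -
    have "ln (z^2 + s^2) - ln (z^2) = ln ((z^2 + s^2) / z^2)"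
      using z by (simp add: ln_div add_pos_nonneg)
    also have "(z^2 + s^2) / z^2 = 1 + s^2 / z^2" using z by (simp add: field_simps)
    finally show ?thesis by simp
  qed
  ultimately show ?thesis using s by (subst nn_integral_real_antiderivative) auto
qed

lemma rational_kernel_nonneg:
  fixes u t z :: real
  assumes u: "0 < u" "u < 1" and t: "t > 0"
  shows "z \<in> {0..1} \<Longrightarrow> 0 \<le> 2*u*t * z^2 / ((1 - u^2 * z^2) * (z^2 + t^2))"
  using rational_kernel_bounds(3)[of u z] u t by (simp add: add_nonneg_pos)

text \<open>The value of the z-integral in the second Tonelli step.\<close>
definition rational_kernel_integral :: "real \<Rightarrow> real \<Rightarrow> real" where
  "rational_kernel_integral t u = (t * (ln (1 + u) - ln (1 - u)) - 2*u*t^2 * vartheta t) / (1 + t^2 * u^2)"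

text \<open>Partial fractions: 2ut z^2/((1 - u^2 z^2)(z^2 + t^2)) is 2ut/(1 + t^2 u^2) times
  1/(1 - u^2 z^2) - t^2/(z^2 + t^2), whose antiderivative is elementary.\<close>
lemma rational_kernel_antiderivative:
  assumes u: "0 < u" "u < 1" and t: "t > 0" and z: "z \<in> {0..1}"
  shows "((\<lambda>z. 2*u*t / (1 + t^2 * u^2) * ((ln (1 + u*z) - ln (1 - u*z)) / (2*u) - t * arctan (z / t)))
           has_real_derivative 2*u*t * z^2 / ((1 - u^2 * z^2) * (z^2 + t^2))) (at z)"
proof -
  note b = rational_kernel_bounds[OF less_imp_le[OF u(1)] u(2) z]
  have q: "0 < z^2 + t^2" using t by (simp add: add_nonneg_pos)
  have p: "0 < 1 + t^2 * u^2" by (simp add: add_pos_nonneg)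
  have "((\<lambda>z. (ln (1 + u*z) - ln (1 - u*z)) / (2*u)) has_real_derivative 1 / (1 - u^2 * z^2)) (at z)"
    using b u by (auto intro!: derivative_eq_intros simp: field_simps power2_eq_square)
  moreover have "((\<lambda>z. t * arctan (z / t)) has_real_derivative t^2 / (z^2 + t^2)) (at z)"
    using q t by (auto intro!: derivative_eq_intros simp: field_simps power2_eq_square)
  ultimately have "((\<lambda>z. 2*u*t / (1 + t^2 * u^2) * ((ln (1 + u*z) - ln (1 - u*z)) / (2*u) - t * arctan (z / t)))
      has_real_derivative 2*u*t / (1 + t^2 * u^2) * (1 / (1 - u^2 * z^2) - t^2 / (z^2 + t^2))) (at z)"
    by (intro DERIV_cmult DERIV_diff)
  also have "1 / (1 - u^2 * z^2) - t^2 / (z^2 + t^2)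
      = (1 * (z^2 + t^2) - t^2 * (1 - u^2 * z^2)) / ((1 - u^2 * z^2) * (z^2 + t^2))"
    using b q by (intro diff_frac_eq) auto
  also have "1 * (z^2 + t^2) - t^2 * (1 - u^2 * z^2) = z^2 * (1 + t^2 * u^2)"
    by (simp add: algebra_simps)
  also have "2*u*t / (1 + t^2 * u^2) * (z^2 * (1 + t^2 * u^2) / ((1 - u^2 * z^2) * (z^2 + t^2)))
           = 2*u*t * z^2 / ((1 - u^2 * z^2) * (z^2 + t^2))"
    using b q p by simp
  finally show ?thesis .
qed

lemma has_integral_rational_kernel:
  assumes u: "0 < u" "u < 1" and t: "t > 0"
  shows "((\<lambda>z. 2*u*t * z^2 / ((1 - u^2 * z^2) * (z^2 + t^2))) has_integral
           rational_kernel_integral t u) {0..1}"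
proof -
  define \<Phi> where "\<Phi> z = 2*u*t / (1 + t^2 * u^2) * ((ln (1 + u*z) - ln (1 - u*z)) / (2*u) - t * arctan (z / t))"
    for z
  have "((\<lambda>z. 2*u*t * z^2 / ((1 - u^2 * z^2) * (z^2 + t^2))) has_integral \<Phi> 1 - \<Phi> 0) {0..1}"
    unfolding \<Phi>_def using rational_kernel_antiderivative[OF u t]
    by (intro has_integral_real_antiderivative) auto
  moreover have "\<Phi> 1 - \<Phi> 0 = rational_kernel_integral t u"
  proof -
    have p: "0 < 1 + t^2 * u^2" by (simp add: add_pos_nonneg)
    have scale: "2*u*t / q * (L / (2*u) - t * w) = (t * L - 2*u*t^2 * w) / q"
      if "q \<noteq> 0" for q L w
      using u that by (simp add: field_simps power2_eq_square)
    have "\<Phi> 1 - \<Phi> 0 = 2*u*t / (1 + t^2 * u^2) * ((ln (1 + u) - ln (1 - u)) / (2*u) - t * vartheta t)"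
      unfolding \<Phi>_def vartheta_def by simp
    also have "\<dots> = rational_kernel_integral t u"
      unfolding rational_kernel_integral_def by (rule scale) (use p in simp)
    finally show ?thesis .
  qed
  ultimately show ?thesis by simp
qed

lemma rational_kernel_integral_nonneg:
  assumes "0 < u" "u < 1" and "t > 0"
  shows "0 \<le> rational_kernel_integral t u"
  using has_integral_rational_kernel[OF assms] rational_kernel_nonneg[OF assms]
  by (rule has_integral_nonneg)

definition hyperbola_region :: "(real \<times> real) set" where
  "hyperbola_region = {(u, x). u \<in> {0..1} \<and> x \<in> {0..1} \<and> 1 \<le> u + x + u * x}"

lemma hyperbola_region_swap: "(u, x) \<in> hyperbola_region \<longleftrightarrow> (x, u) \<in> hyperbola_region"
  unfolding hyperbola_region_def by (auto simp: algebra_simps)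

lemma hyperbola_slice:
  fixes u x :: real
  assumes "0 < u" "u \<le> 1"
  shows "(u, x) \<in> hyperbola_region \<longleftrightarrow> x \<in> {(1 - u) / (1 + u)..1}"
proof -
  have iff: "(1 - u) / (1 + u) \<le> x \<longleftrightarrow> 1 \<le> u + x + u * x"
    using assms by (simp add: divide_le_eq algebra_simps)
  have "0 \<le> (1 - u) / (1 + u)" using assms by simp
  hence "(1 - u) / (1 + u) \<le> x \<Longrightarrow> 0 \<le> x" by linarith
  thus ?thesis using assms iff unfolding hyperbola_region_def by auto
qed

text \<open>The integrand of the first Tonelli step: ln((1+u)/(1-u)) is the integral of 1/x over
  the slice of the hyperbola region, and t/(1 + t^2 u^2) integrates to an arctangent difference.\<close>
definition log_ratio_integrand :: "real \<Rightarrow> real \<Rightarrow> real \<Rightarrow> ennreal" where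
  "log_ratio_integrand t u x = ennreal (t / (1 + t^2 * u^2) * (1 / x)) * indicator hyperbola_region (u, x)"

lemma log_ratio_integrand_slice_u:
  assumes t: "t \<ge> 0" and "u \<noteq> 0" "u \<noteq> 1"
  shows "(\<integral>\<^sup>+x. log_ratio_integrand t u x \<partial>lborel)
       = ennreal (t * (ln (1 + u) - ln (1 - u)) / (1 + t^2 * u^2)) * indicator {0..1} u"
proof (cases "u \<in> {0..1}")
  case True
  with assms have u: "0 < u" "u < 1" by auto
  have k: "0 \<le> t / (1 + t^2 * u^2)" using t by (simp add: add_pos_nonneg)
  have "(\<integral>\<^sup>+x. log_ratio_integrand t u x \<partial>lborel)
      = (\<integral>\<^sup>+x\<in>{(1 - u) / (1 + u)..1}. ennreal (t / (1 + t^2 * u^2) * (1 / x)) \<partial>lborel)"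
    using hyperbola_slice[of u] u by (simp add: log_ratio_integrand_def indicator_def)
  also have "\<dots> = ennreal (t / (1 + t^2 * u^2)) * ennreal (ln (1 + u) - ln (1 - u))"
    using nn_integral_const_factor[OF k, of "\<lambda>x. 1 / x"] nn_integral_inverse[OF u] by simp
  also have "\<dots> = ennreal (t * (ln (1 + u) - ln (1 - u)) / (1 + t^2 * u^2))"
    using k by (simp add: ennreal_mult'[symmetric])
  finally show ?thesis using True by simp
next
  case False
  hence "log_ratio_integrand t u x = 0" for x by (auto simp: log_ratio_integrand_def hyperbola_region_def)
  thus ?thesis using False by simp
qed

lemma log_ratio_integrand_slice_x:
  assumes t: "t \<ge> 0" and "x \<noteq> 0"
  shows "(\<integral>\<^sup>+u. log_ratio_integrand t u x \<partial>lborel) = ennreal (clausen_kernel t x) * indicator {0..1} x"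
proof (cases "x \<in> {0..1}")
  case True
  with assms have x: "0 < x" "x \<le> 1" by auto
  define k where "k u = t / (1 + t^2 * u^2)" for u :: real
  have "(\<integral>\<^sup>+u. log_ratio_integrand t u x \<partial>lborel)
      = (\<integral>\<^sup>+u\<in>{(1 - x) / (1 + x)..1}. ennreal (1 / x * k u) \<partial>lborel)"
    using hyperbola_slice[of x] hyperbola_region_swap[of _ x] x
    by (simp add: log_ratio_integrand_def k_def indicator_def mult.commute)
  also have "\<dots> = ennreal (1 / x) * (\<integral>\<^sup>+u\<in>{(1 - x) / (1 + x)..1}. ennreal (k u) \<partial>lborel)"
    by (rule nn_integral_const_factor) (use x in \<open>auto simp: k_def\<close>)
  also have "(\<integral>\<^sup>+u\<in>{(1 - x) / (1 + x)..1}. ennreal (k u) \<partial>lborel)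
           = ennreal (arctan t - arctan (t * (1 - x) / (1 + x)))"
    unfolding k_def by (rule nn_integral_arctan_kernel[OF t x])
  also have "ennreal (1 / x) * ennreal (arctan t - arctan (t * (1 - x) / (1 + x)))
           = ennreal (1 / x * (arctan t - arctan (t * (1 - x) / (1 + x))))"
    by (rule ennreal_mult'[symmetric]) (use x in simp)
  also have "1 / x * (arctan t - arctan (t * (1 - x) / (1 + x))) = clausen_kernel t x"
    using clausen_kernel_arctan_diff[OF t x] by simp
  finally show ?thesis using True by simp
next
  case False
  hence "log_ratio_integrand t u x = 0" for u by (auto simp: log_ratio_integrand_def hyperbola_region_def)
  thus ?thesis using False by simp
qed

lemma nn_integral_log_ratio_kernel:
  assumes t: "t \<ge> 0"
  shows "(\<integral>\<^sup>+u\<in>{0..1}. ennreal (t * (ln (1 + u) - ln (1 - u)) / (1 + t^2 * u^2)) \<partial>lborel)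
       = ennreal (clausen_integral t)"
proof -
  have "(\<integral>\<^sup>+u\<in>{0..1}. ennreal (t * (ln (1 + u) - ln (1 - u)) / (1 + t^2 * u^2)) \<partial>lborel)
      = (\<integral>\<^sup>+x\<in>{0..1}. ennreal (clausen_kernel t x) \<partial>lborel)"
  proof (rule nn_integral_swap_by_slices)
    show "case_prod (log_ratio_integrand t) \<in> borel_measurable (lborel \<Otimes>\<^sub>M lborel)"
      by (simp add: log_ratio_integrand_def hyperbola_region_def case_prod_unfold)
    show "AE u in lborel. (\<integral>\<^sup>+x. log_ratio_integrand t u x \<partial>lborel)
          = ennreal (t * (ln (1 + u) - ln (1 - u)) / (1 + t^2 * u^2)) * indicator {0..1} u"
      using AE_lborel_singleton[of 0] AE_lborel_singleton[of 1]
      by eventually_elim (rule log_ratio_integrand_slice_u[OF t])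
    show "AE x in lborel. (\<integral>\<^sup>+u. log_ratio_integrand t u x \<partial>lborel)
          = ennreal (clausen_kernel t x) * indicator {0..1} x"
      using AE_lborel_singleton[of 0] by eventually_elim (rule log_ratio_integrand_slice_x[OF t])
  qed
  also have "\<dots> = ennreal (clausen_integral t)"
    unfolding clausen_integral_def using clausen_kernel_nonneg[OF t]
    by (intro nn_integral_has_integral_lebesgue' integrable_integral
        integrable_continuous_interval continuous_on_clausen_kernel) auto
  finally show ?thesis .
qed

text \<open>The integrand of the second Tonelli step: -ln(1 - z^2) is the integral over u of
  2 z^2 u/(1 - z^2 u^2), multiplied by the Poisson-type kernel t/(z^2 + t^2).\<close>
definition neg_ln_poisson_integrand :: "real \<Rightarrow> real \<Rightarrow> real \<Rightarrow> ennreal" where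
  "neg_ln_poisson_integrand t z u =
     ennreal (2*u*t * z^2 / ((1 - u^2 * z^2) * (z^2 + t^2))) * indicator ({0..1} \<times> {0..1}) (z, u)"

lemma neg_ln_poisson_integrand_slice_z:
  assumes t: "t > 0" and "z \<noteq> 1"
  shows "(\<integral>\<^sup>+u. neg_ln_poisson_integrand t z u \<partial>lborel)
       = ennreal (- ln (1 - z^2) * (t / (z^2 + t^2))) * indicator {0..1} z"
proof (cases "z \<in> {0..1}")
  case True
  with assms have z: "0 \<le> z" "z < 1" by auto
  have c: "0 \<le> t / (z^2 + t^2)" using t by (simp add: add_nonneg_pos)
  have "neg_ln_poisson_integrand t z u
      = ennreal (t / (z^2 + t^2) * (2 * z^2 * u / (1 - z^2 * u^2))) * indicator {0..1} u" for u
  proof (cases "u \<in> {0..1}")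
    case True
    have "0 < 1 - z^2 * u^2" using rational_kernel_bounds(3)[OF z True] .
    moreover have "0 < z^2 + t^2" using t by (simp add: add_nonneg_pos)
    ultimately show ?thesis
      using \<open>z \<in> {0..1}\<close> True by (simp add: neg_ln_poisson_integrand_def field_simps)
  qed (simp add: neg_ln_poisson_integrand_def)
  hence "(\<integral>\<^sup>+u. neg_ln_poisson_integrand t z u \<partial>lborel)
       = (\<integral>\<^sup>+u\<in>{0..1}. ennreal (t / (z^2 + t^2) * (2 * z^2 * u / (1 - z^2 * u^2))) \<partial>lborel)"
    by simp
  also have "\<dots> = ennreal (t / (z^2 + t^2))
                   * (\<integral>\<^sup>+u\<in>{0..1}. ennreal (2 * z^2 * u / (1 - z^2 * u^2)) \<partial>lborel)"
    by (rule nn_integral_const_factor[OF c]) auto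
  also have "(\<integral>\<^sup>+u\<in>{0..1}. ennreal (2 * z^2 * u / (1 - z^2 * u^2)) \<partial>lborel) = ennreal (- ln (1 - z^2))"
    by (rule nn_integral_neg_ln_kernel[OF z])
  also have "ennreal (t / (z^2 + t^2)) * ennreal (- ln (1 - z^2)) = ennreal (t / (z^2 + t^2) * - ln (1 - z^2))"
    by (rule ennreal_mult'[symmetric, OF c])
  finally show ?thesis using True by (simp add: mult.commute)
next
  case False
  hence "neg_ln_poisson_integrand t z u = 0" for u by (auto simp: neg_ln_poisson_integrand_def indicator_def)
  thus ?thesis using False by simp
qed

lemma neg_ln_poisson_integrand_slice_u:
  assumes t: "t > 0" and "u \<noteq> 0" "u \<noteq> 1"
  shows "(\<integral>\<^sup>+z. neg_ln_poisson_integrand t z u \<partial>lborel)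
       = ennreal (rational_kernel_integral t u) * indicator {0..1} u"
proof (cases "u \<in> {0..1}")
  case True
  with assms have u: "0 < u" "u < 1" by auto
  have "(\<integral>\<^sup>+z. neg_ln_poisson_integrand t z u \<partial>lborel)
       = (\<integral>\<^sup>+z\<in>{0..1}. ennreal (2*u*t * z^2 / ((1 - u^2 * z^2) * (z^2 + t^2))) \<partial>lborel)"
    using True by (simp add: neg_ln_poisson_integrand_def indicator_def)
  also have "\<dots> = ennreal (rational_kernel_integral t u)"
    by (rule nn_integral_has_integral_lebesgue'[OF rational_kernel_nonneg[OF u t]
        has_integral_rational_kernel[OF u t]])
  finally show ?thesis using True by simp
next
  case False
  hence "neg_ln_poisson_integrand t z u = 0" for z by (auto simp: neg_ln_poisson_integrand_def indicator_def)
  thus ?thesis using False by simp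
qed

lemma nn_integral_neg_ln_poisson_swap:
  assumes t: "t > 0"
  shows "(\<integral>\<^sup>+z\<in>{0..1}. ennreal (- ln (1 - z^2) * (t / (z^2 + t^2))) \<partial>lborel)
       = (\<integral>\<^sup>+u\<in>{0..1}. ennreal (rational_kernel_integral t u) \<partial>lborel)"
proof (rule nn_integral_swap_by_slices)
  show "case_prod (neg_ln_poisson_integrand t) \<in> borel_measurable (lborel \<Otimes>\<^sub>M lborel)"
    by (simp add: neg_ln_poisson_integrand_def case_prod_unfold)
  show "AE z in lborel. (\<integral>\<^sup>+u. neg_ln_poisson_integrand t z u \<partial>lborel)
        = ennreal (- ln (1 - z^2) * (t / (z^2 + t^2))) * indicator {0..1} z"
    using AE_lborel_singleton[of 1] by eventually_elim (rule neg_ln_poisson_integrand_slice_z[OF t])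
  show "AE u in lborel. (\<integral>\<^sup>+z. neg_ln_poisson_integrand t z u \<partial>lborel)
        = ennreal (rational_kernel_integral t u) * indicator {0..1} u"
    using AE_lborel_singleton[of 0] AE_lborel_singleton[of 1]
    by eventually_elim (rule neg_ln_poisson_integrand_slice_u[OF t])
qed

text \<open>Adding back the arctangent part of the partial fractions recovers the logarithmic kernel
  of the first Tonelli step.\<close>
lemma nn_integral_rational_kernel_integral:
  assumes t: "t > 0"
  shows "(\<integral>\<^sup>+u\<in>{0..1}. ennreal (rational_kernel_integral t u) \<partial>lborel) + ennreal (vartheta t * ln (1 + t^2))
       = ennreal (Cl2 (2 * vartheta t))"
proof -
  define W where "W u = 2 * u * t^2 * vartheta t / (1 + t^2 * u^2)" for u
  have vartheta_nonneg: "0 \<le> vartheta t" using vartheta_pos[OF t] by simp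
  have "(\<integral>\<^sup>+u\<in>{0..1}. ennreal (rational_kernel_integral t u) \<partial>lborel) + ennreal (vartheta t * ln (1 + t^2))
      = (\<integral>\<^sup>+u. ennreal (rational_kernel_integral t u) * indicator {0..1} u
                + ennreal (W u) * indicator {0..1} u \<partial>lborel)"
    unfolding nn_integral_log_kernel[OF vartheta_nonneg, of t, symmetric] W_def
    by (rule nn_integral_add[symmetric]) (simp_all add: rational_kernel_integral_def)
  also have "\<dots> = (\<integral>\<^sup>+u\<in>{0..1}. ennreal (t * (ln (1 + u) - ln (1 - u)) / (1 + t^2 * u^2)) \<partial>lborel)"
  proof (rule nn_integral_cong_AE)
    show "AE u in lborel. ennreal (rational_kernel_integral t u) * indicator {0..1} u
                          + ennreal (W u) * indicator {0..1} u
          = ennreal (t * (ln (1 + u) - ln (1 - u)) / (1 + t^2 * u^2)) * indicator {0..1} u"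
      using AE_lborel_singleton[of 0] AE_lborel_singleton[of 1]
    proof eventually_elim
      case (elim u)
      show ?case
      proof (cases "u \<in> {0..1}")
        case True
        with elim have u: "0 < u" "u < 1" by auto
        have "rational_kernel_integral t u + W u = t * (ln (1 + u) - ln (1 - u)) / (1 + t^2 * u^2)"
          unfolding rational_kernel_integral_def W_def by (simp add: diff_divide_distrib)
        moreover have "0 \<le> W u" unfolding W_def using u vartheta_nonneg by simp
        ultimately show ?thesis
          using True rational_kernel_integral_nonneg[OF u t] by (simp flip: ennreal_plus)
      qed simp
    qed
  qed
  also have "\<dots> = ennreal (Cl2 (2 * vartheta t))"
    using nn_integral_log_ratio_kernel clausen_integral_eq_Cl2[OF t] t by simp
  finally show ?thesis .
qed

lemma nn_integral_neg_ln_poisson: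
  assumes t: "t > 0"
  shows "(\<integral>\<^sup>+z\<in>{0..1}. ennreal (- ln (1 - z^2) * (t / (z^2 + t^2))) \<partial>lborel)
           = ennreal (Cl2 (2 * vartheta t) - vartheta t * ln (1 + t^2))" (is "?M = _")
    and "vartheta t * ln (1 + t^2) \<le> Cl2 (2 * vartheta t)"
proof -
  have sum: "?M + ennreal (vartheta t * ln (1 + t^2)) = ennreal (Cl2 (2 * vartheta t))"
    unfolding nn_integral_neg_ln_poisson_swap[OF t] by (rule nn_integral_rational_kernel_integral[OF t])
  have "0 < ln (1 + t^2)" by (rule ln_gt_zero) (use t in simp)
  hence log_term_pos: "0 < vartheta t * ln (1 + t^2)" using vartheta_pos[OF t] by simp
  have "ennreal (vartheta t * ln (1 + t^2)) \<le> ennreal (Cl2 (2 * vartheta t))"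
    unfolding sum[symmetric] by simp
  thus "vartheta t * ln (1 + t^2) \<le> Cl2 (2 * vartheta t)"
    using log_term_pos by (simp add: ennreal_le_iff2)
  have "?M = ennreal (Cl2 (2 * vartheta t)) - ennreal (vartheta t * ln (1 + t^2))"
    unfolding sum[symmetric] by simp
  thus "?M = ennreal (Cl2 (2 * vartheta t) - vartheta t * ln (1 + t^2))"
    using log_term_pos by (simp add: ennreal_minus)
qed

lemma Cl2_double_vartheta_lower_bound:
  assumes "t \<ge> 0"
  shows "vartheta t * ln (1 + t^2) \<le> Cl2 (2 * vartheta t)"
proof (cases "t = 0")
  case True
  thus ?thesis by (simp add: vartheta_def Cl2_def)
next
  case False
  with assms show ?thesis by (intro nn_integral_neg_ln_poisson(2)) auto
qed

text \<open>The integrand of the third Tonelli step: ln(1 + s^2/z^2) is the integral of 2t/(z^2 + t^2)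
  over t \<in> [0, s].\<close>
definition log_product_integrand :: "real \<Rightarrow> real \<Rightarrow> real \<Rightarrow> ennreal" where
  "log_product_integrand s z t =
     ennreal (- ln (1 - z^2) * (2 * t / (z^2 + t^2))) * indicator ({0..1} \<times> {0..s}) (z, t)"

lemma log_product_integrand_slice_z:
  assumes s: "s > 0" and "z \<noteq> 0" "z \<noteq> 1"
  shows "(\<integral>\<^sup>+t. log_product_integrand s z t \<partial>lborel)
       = ennreal (- ln (1 - z^2) * ln (1 + s^2 / z^2)) * indicator {0<..<1} z"
proof (cases "z \<in> {0..1}")
  case True
  with assms have z: "0 < z" "z < 1" by auto
  have c: "0 \<le> - ln (1 - z^2)" using z by (intro neg_ln_one_minus_sq_nonneg) auto
  have "(\<integral>\<^sup>+t. log_product_integrand s z t \<partial>lborel)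
      = (\<integral>\<^sup>+t\<in>{0..s}. ennreal (- ln (1 - z^2) * (2 * t / (z^2 + t^2))) \<partial>lborel)"
    using True by (simp add: log_product_integrand_def indicator_def)
  also have "\<dots> = ennreal (- ln (1 - z^2)) * (\<integral>\<^sup>+t\<in>{0..s}. ennreal (2 * t / (z^2 + t^2)) \<partial>lborel)"
    by (rule nn_integral_const_factor[OF c]) auto
  also have "(\<integral>\<^sup>+t\<in>{0..s}. ennreal (2 * t / (z^2 + t^2)) \<partial>lborel) = ennreal (ln (1 + s^2 / z^2))"
    using z s by (intro nn_integral_ln_one_plus_sq) auto
  also have "ennreal (- ln (1 - z^2)) * ennreal (ln (1 + s^2 / z^2))
           = ennreal (- ln (1 - z^2) * ln (1 + s^2 / z^2))"
    by (rule ennreal_mult'[symmetric, OF c])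
  finally show ?thesis using z by simp
next
  case False
  hence "log_product_integrand s z t = 0" for t by (auto simp: log_product_integrand_def indicator_def)
  thus ?thesis using False by (auto simp: indicator_def)
qed

lemma log_product_integrand_slice_t:
  assumes "t \<noteq> 0"
  shows "(\<integral>\<^sup>+z. log_product_integrand s z t \<partial>lborel)
       = ennreal (2 * (Cl2 (2 * vartheta t) - vartheta t * ln (1 + t^2))) * indicator {0..s} t"
proof (cases "t \<in> {0..s}")
  case True
  with assms have t: "t > 0" by auto
  have "(\<integral>\<^sup>+z. log_product_integrand s z t \<partial>lborel)
      = (\<integral>\<^sup>+z\<in>{0..1}. ennreal (2 * (- ln (1 - z^2) * (t / (z^2 + t^2)))) \<partial>lborel)"
    using True by (simp add: log_product_integrand_def indicator_def algebra_simps)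
  also have "\<dots> = ennreal 2 * (\<integral>\<^sup>+z\<in>{0..1}. ennreal (- ln (1 - z^2) * (t / (z^2 + t^2))) \<partial>lborel)"
    by (rule nn_integral_const_factor) auto
  also have "\<dots> = ennreal 2 * ennreal (Cl2 (2 * vartheta t) - vartheta t * ln (1 + t^2))"
    by (simp only: nn_integral_neg_ln_poisson(1)[OF t])
  also have "\<dots> = ennreal (2 * (Cl2 (2 * vartheta t) - vartheta t * ln (1 + t^2)))"
    by (rule ennreal_mult'[symmetric]) simp
  finally show ?thesis using True by simp
next
  case False
  hence "log_product_integrand s z t = 0" for z by (auto simp: log_product_integrand_def indicator_def)
  thus ?thesis using False by simp
qed

lemma nn_integral_log_product:
  assumes s: "s > 0"
  shows "(\<integral>\<^sup>+z\<in>{0<..<1}. ennreal (- ln (1 - z^2) * ln (1 + s^2 / z^2)) \<partial>lborel)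
       = ennreal (- closed_form s)"
proof -
  have "(\<integral>\<^sup>+z\<in>{0<..<1}. ennreal (- ln (1 - z^2) * ln (1 + s^2 / z^2)) \<partial>lborel)
      = (\<integral>\<^sup>+t\<in>{0..s}. ennreal (2 * (Cl2 (2 * vartheta t) - vartheta t * ln (1 + t^2))) \<partial>lborel)"
  proof (rule nn_integral_swap_by_slices)
    show "case_prod (log_product_integrand s) \<in> borel_measurable (lborel \<Otimes>\<^sub>M lborel)"
      by (simp add: log_product_integrand_def case_prod_unfold)
    show "AE z in lborel. (\<integral>\<^sup>+t. log_product_integrand s z t \<partial>lborel)
          = ennreal (- ln (1 - z^2) * ln (1 + s^2 / z^2)) * indicator {0<..<1} z"
      using AE_lborel_singleton[of 0] AE_lborel_singleton[of 1]
      by eventually_elim (rule log_product_integrand_slice_z[OF s])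
    show "AE t in lborel. (\<integral>\<^sup>+z. log_product_integrand s z t \<partial>lborel)
          = ennreal (2 * (Cl2 (2 * vartheta t) - vartheta t * ln (1 + t^2))) * indicator {0..s} t"
      using AE_lborel_singleton[of 0] by eventually_elim (rule log_product_integrand_slice_t)
  qed
  also have "\<dots> = ennreal (- closed_form s)"
    using Cl2_double_vartheta_lower_bound
    by (intro nn_integral_has_integral_lebesgue' has_integral_closed_form s) auto
  finally show ?thesis .
qed

theorem mainTheorem11:
  fixes s :: real
  assumes "s > 0"
  shows "set_integrable lborel {0<..<1::real}
           (\<lambda>z. ln (1 - z^2) * ln (1 + s^2 / z^2))
       \<and> (LINT z:{0<..<1}|lborel. ln (1 - z^2) * ln (1 + s^2 / z^2))
           = pi^2 / 2 + 4 * (1 - ln 2) * Q0 s - 2 * (vartheta s)^2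
             + 2 * s * vartheta s * ln ((1 + s^2) / 4)
             - 2 * s * Cl2 (2 * vartheta s)"
proof -
  have integrand_nonpos: "ln (1 - z^2) * ln (1 + s^2 / z^2) \<le> 0" if "z \<in> {0<..<1}" for z
    using neg_ln_one_minus_sq_nonneg[of z] that by (simp add: mult_nonpos_nonneg)
  have "0 \<le> - closed_form s"
    by (rule has_integral_nonneg[OF has_integral_closed_form[OF assms]])
      (use Cl2_double_vartheta_lower_bound in auto)
  with nn_integral_log_product[OF assms] integrand_nonpos
  have "set_integrable lborel {0<..<1::real} (\<lambda>z. ln (1 - z^2) * ln (1 + s^2 / z^2))
        \<and> (LINT z:{0<..<1}|lborel. ln (1 - z^2) * ln (1 + s^2 / z^2)) = closed_form s"
    using set_integral_nonpos_from_nn_integral[of "\<lambda>z. ln (1 - z^2) * ln (1 + s^2 / z^2)"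
        "{0<..<1}" "- closed_form s"]
    by simp
  thus ?thesis unfolding closed_form_def .
qed

end
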